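(* For all $n\ge0$, \[ c_n^2=c_n+2\sum_{k=0}^{n-3}\sum_{r=3}^{n-k}p_{r-1}c_k c_{n-k-r}^2 . \]
   Context: The Narayana's cows numbers $c_n$ are defined by $c_n=\delta_{n,0}+c_{n-1}+c_{n-3}$ for $n\ge0$, $c_n=0$ for $n<0$. The Padovan numbers $p_n$ are defined by $p_n=\delta_{n,0}+p_{n-2}+p_{n-3}$ for $n\ge0$, $p_n=0$ for $n<0$. $\delta_{i,j}$ is $1$ if $i=j$ and $0$ otherwise. Empty sums are $0$. *)

theory Defs
  imports Main
begin

text \<open>Narayana's cows numbers: c 0 = 1, c n = c (n-1) + c (n-3), with c of negative index = 0.\<close>
fun cows :: "nat \<Rightarrow> nat" where
  "cows 0 = 1"
| "cows (Suc 0) = 1"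
| "cows (Suc (Suc 0)) = 1"
| "cows (Suc (Suc (Suc n))) = cows (Suc (Suc n)) + cows n"

text \<open>Padovan numbers: p 0 = 1, p n = p (n-2) + p (n-3), with p of negative index = 0.\<close>
fun padovan :: "nat \<Rightarrow> nat" where
  "padovan 0 = 1"
| "padovan (Suc 0) = 0"
| "padovan (Suc (Suc 0)) = 1"
| "padovan (Suc (Suc (Suc n))) = padovan (Suc n) + padovan n"

end

theory Submission
  imports Defs "HOL-Computational_Algebra.Formal_Power_Series"
begin

text \<open>With \<open>A = 1 - x - x\<^sup>3\<close> and \<open>B = 1 - x\<^sup>2 - x\<^sup>3\<close>, the generating functions of the
  cows and Padovan numbers are \<open>C = 1/A\<close> and \<open>P = 1/B\<close>. The squares \<open>c\<^sub>n\<^sup>2\<close> satisfy a linear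
  recurrence of order six, whose generating function is \<open>D = B / (A B - 2 x\<^sup>3 - 2 x\<^sup>4)\<close>.
  A ring calculation then gives \<open>D - C = 2 C D x (P - 1)\<close>, and comparing the coefficients of
  \<open>x\<^sup>n\<close> on both sides is the identity.\<close>

definition fps_cows :: "int fps" where
  "fps_cows = Abs_fps (\<lambda>n. int (cows n))"

definition fps_padovan :: "int fps" where
  "fps_padovan = Abs_fps (\<lambda>n. int (padovan n))"

definition fps_cows_sq :: "int fps" where
  "fps_cows_sq = Abs_fps (\<lambda>n. int (cows n)^2)"

lemma cows_add_3: "cows (n + 3) = cows (n + 2) + cows n"
  by (simp add: numeral_eq_Suc)

lemma cows_sq_recurrence:
  "int (cows (n + 6))^2 = int (cows (n + 5))^2 + int (cows (n + 4))^2 + 3 * int (cows (n + 3))^2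
    + int (cows (n + 2))^2 - int (cows (n + 1))^2 - int (cows n)^2"
  using cows_add_3[of n] cows_add_3[of "n + 1"] cows_add_3[of "n + 2"] cows_add_3[of "n + 3"]
  by (simp add: algebra_simps power2_eq_square)

lemma fps_cows_times_denom: "fps_cows * (1 - fps_X - fps_X^3) = 1"
proof (rule fps_ext)
  fix n
  show "fps_nth (fps_cows * (1 - fps_X - fps_X^3)) n = fps_nth 1 n"
    by (cases n rule: cows.cases) (auto simp: fps_cows_def algebra_simps fps_X_power_mult_right_nth)
qed

lemma fps_padovan_times_denom: "fps_padovan * (1 - fps_X^2 - fps_X^3) = 1"
proof (rule fps_ext)
  fix n
  show "fps_nth (fps_padovan * (1 - fps_X^2 - fps_X^3)) n = fps_nth 1 n"
    by (cases n rule: padovan.cases)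
      (auto simp: fps_padovan_def algebra_simps fps_X_power_mult_right_nth numeral_eq_Suc)
qed

lemma fps_cows_sq_times_denom:
  "fps_cows_sq * ((1 - fps_X - fps_X^3) * (1 - fps_X^2 - fps_X^3) - 2 * fps_X^3 - 2 * fps_X^4)
    = 1 - fps_X^2 - fps_X^3"
proof -
  have "fps_cows_sq * (1 - fps_X - fps_X^2 - 3 * fps_X^3 - fps_X^4 + fps_X^5 + fps_X^6)
    = 1 - fps_X^2 - fps_X^3"
  proof (rule fps_ext)
    fix n
    show "fps_nth (fps_cows_sq * (1 - fps_X - fps_X^2 - 3 * fps_X^3 - fps_X^4 + fps_X^5 + fps_X^6)) n
      = fps_nth (1 - fps_X^2 - fps_X^3) n"
    proof (cases "n < 6")
      case True
      then consider "n = 0" | "n = 1" | "n = 2" | "n = 3" | "n = 4" | "n = 5" by linarith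
      then show ?thesis
        by cases (simp_all add: fps_cows_sq_def algebra_simps fps_X_power_mult_nth
            numeral_fps_const eval_nat_numeral)
    next
      case False
      then obtain m where "n = m + 6" using le_Suc_ex not_less by (metis add.commute)
      then show ?thesis
        using cows_sq_recurrence[of m]
        by (simp add: fps_cows_sq_def algebra_simps fps_X_power_mult_nth numeral_fps_const)
    qed
  qed
  then show ?thesis
    by (simp add: algebra_simps power_numeral_reduce)
qed

lemma fps_cows_sq_minus_fps_cows:
  "fps_cows_sq - fps_cows = 2 * fps_cows * (fps_X * (fps_padovan - 1)) * fps_cows_sq"
proof -
  let ?C = fps_cows and ?P = fps_padovan and ?D = fps_cows_sq and ?X = "fps_X :: int fps"
  define A where "A = 1 - ?X - ?X^3"
  define B where "B = 1 - ?X^2 - ?X^3"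
  have C: "?C * A = 1" and P: "?P * B = 1" and D: "?D * (A * B - 2 * ?X^3 - 2 * ?X^4) = B"
    using fps_cows_times_denom fps_padovan_times_denom fps_cows_sq_times_denom
    by (simp_all add: A_def B_def)
  have "?D - ?C = ?D * (?C * A) - ?C * (?P * B)"
    using C P by simp
  also have "\<dots> = ?D * ?C * A - ?C * ?P * (?D * (A * B - 2 * ?X^3 - 2 * ?X^4))"
    using D by (simp add: mult.assoc)
  also have "\<dots> = ?C * ?D * (A * (1 - ?P * B) + 2 * ?P * (?X^3 + ?X^4))"
    by (simp add: algebra_simps)
  also have "\<dots> = 2 * ?C * ?D * ?X * (?P * (1 - B))"
    using P by (simp add: B_def algebra_simps power_numeral_reduce)
  also have "\<dots> = 2 * ?C * (?X * (?P - 1)) * ?D"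
    using P by (simp add: algebra_simps)
  finally show ?thesis .
qed

lemma fps_X_times_padovan_minus_1_nth:
  "fps_nth (fps_X * (fps_padovan - 1)) r = (if 3 \<le> r then int (padovan (r - 1)) else 0)"
  by (cases r rule: padovan.cases) (simp_all add: fps_padovan_def)

lemma fps_cows_padovan_cows_sq_nth:
  "fps_nth (fps_cows * (fps_X * (fps_padovan - 1)) * fps_cows_sq) n
    = (\<Sum>k \<in> {k. k + 3 \<le> n}. \<Sum>r = 3..n - k.
         int (padovan (r - 1)) * int (cows k) * int (cows (n - k - r))^2)"
proof -
  have "fps_nth (fps_cows * (fps_X * (fps_padovan - 1)) * fps_cows_sq) n
      = (\<Sum>k = 0..n. \<Sum>r = 0..n - k. int (cows k) *
           ((if 3 \<le> r then int (padovan (r - 1)) else 0) * int (cows (n - k - r))^2))"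
    unfolding mult.assoc[of fps_cows] fps_mult_nth[of fps_cows] fps_mult_nth[of "fps_X * (fps_padovan - 1)"]
      fps_X_times_padovan_minus_1_nth
    by (simp add: fps_cows_def fps_cows_sq_def sum_distrib_left)
  also have "\<dots> = (\<Sum>k = 0..n. \<Sum>r = 3..n - k.
         int (padovan (r - 1)) * int (cows k) * int (cows (n - k - r))^2)"
    by (intro sum.cong refl sum.mono_neutral_cong_right) auto
  also have "\<dots> = (\<Sum>k \<in> {k. k + 3 \<le> n}. \<Sum>r = 3..n - k.
         int (padovan (r - 1)) * int (cows k) * int (cows (n - k - r))^2)"
    by (rule sum.mono_neutral_right) (auto intro!: sum.neutral)
  finally show ?thesis .
qed

theorem mainTheorem16:
  fixes n :: nat
  shows "(cows n)^2 = cows n + 2 * (\<Sum>k \<in> {k. k + 3 \<le> n}. \<Sum>r = 3..n - k.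
           padovan (r - 1) * cows k * (cows (n - k - r))^2)"
proof -
  have "fps_nth (fps_cows_sq - fps_cows) n
      = 2 * fps_nth (fps_cows * (fps_X * (fps_padovan - 1)) * fps_cows_sq) n"
    unfolding fps_cows_sq_minus_fps_cows by (simp add: mult.assoc numeral_fps_const)
  then have "int (cows n)^2 - int (cows n) = 2 * (\<Sum>k \<in> {k. k + 3 \<le> n}. \<Sum>r = 3..n - k.
           int (padovan (r - 1)) * int (cows k) * int (cows (n - k - r))^2)"
    by (simp only: fps_cows_padovan_cows_sq_nth fps_sub_nth) (simp add: fps_cows_def fps_cows_sq_def)
  then have "int ((cows n)^2) = int (cows n + 2 * (\<Sum>k \<in> {k. k + 3 \<le> n}. \<Sum>r = 3..n - k.
           padovan (r - 1) * cows k * (cows (n - k - r))^2))"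
    by simp
  then show ?thesis
    by (simp only: of_nat_eq_iff)
qed

end
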